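(* Let $D\subset\mathbb{R}^{n-1}$ be a bounded $C^\infty$ domain, $\ell>0$, $\Omega=D\times(0,\ell)$, $\partial\Omega_1=(D\times\{0\})\cup(D\times\{\ell\})$, $\partial\Omega_2=\partial D\times[0,\ell]$, $\alpha\ge0$, $f\in L^2(\Omega)$, and let $v$ solve $-\Delta v=f^{\#}$ in $\Omega$, $\frac{\partial v}{\partial\nu}=0$ on $\partial\Omega_1$, $\frac{\partial v}{\partial\nu}+\alpha v=0$ on $\partial\Omega_2$, where $f^{\#}$ is the decreasing rearrangement of $f$ in the $y$-direction; when $\alpha=0$ assume $f$ and $v$ have zero mean on $\Omega$. Assume $f$ and $f^{\#}$ are continuous on $\overline\Omega$ and sufficiently regular that $v\in C^2(\overline\Omega)$ and the solution $u$ of the same problem with data $f$ in place of $f^{\#}$ (zero mean when $\alpha=0$) lies in $C^2(\overline\Omega)$. Then $v=v^{\#}$ on $\Omega$.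
   Context: Points of $\Omega$ are $(x,y)$, $x\in D$, $y\in(0,\ell)$. For $g\in L^1(0,\ell)$, $g^*(t)=\inf\{s:|\{g>s\}|\le t\}$ for $0<t<\ell$ (endpoints: ess sup, ess inf). For $h$ on $\Omega$, $h^{\#}(x,y)=(h^x)^*(y)$ with $h^x(y)=h(x,y)$. *)

theory Defs
  imports "HOL-Analysis.Analysis"
begin

definition grad :: "('a::euclidean_space \<Rightarrow> real) \<Rightarrow> 'a \<Rightarrow> 'a" where
  "grad f x = (\<Sum>i\<in>Basis. frechet_derivative f (at x) i *\<^sub>R i)"

fun Ck :: "nat \<Rightarrow> ('a::euclidean_space \<Rightarrow> real) \<Rightarrow> bool" where
  "Ck 0 f = continuous_on UNIV f"
| "Ck (Suc k) f = (f differentiable_on UNIV \<and> continuous_on UNIV f \<and>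
      (\<forall>i\<in>Basis. Ck k (\<lambda>x. frechet_derivative f (at x) i)))"

definition smooth :: "('a::euclidean_space \<Rightarrow> real) \<Rightarrow> bool" where
  "smooth f \<longleftrightarrow> (\<forall>k. Ck k f)"

definition smooth_bounded_domain :: "'a::euclidean_space set \<Rightarrow> ('a \<Rightarrow> real) \<Rightarrow> bool" where
  "smooth_bounded_domain D \<rho> \<longleftrightarrow> open D \<and> connected D \<and> D \<noteq> {} \<and> bounded D \<and>
     smooth \<rho> \<and> D = {x. \<rho> x < 0} \<and> frontier D = {x. \<rho> x = 0} \<and>
     (\<forall>x\<in>frontier D. grad \<rho> x \<noteq> 0)"

definition outer_normal :: "('a::euclidean_space \<Rightarrow> real) \<Rightarrow> 'a \<Rightarrow> 'a" where
  "outer_normal \<rho> x = (1 / norm (grad \<rho> x)) *\<^sub>R grad \<rho> x"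

definition drearr :: "real \<Rightarrow> (real \<Rightarrow> real) \<Rightarrow> real \<Rightarrow> real" where
  "drearr l g t = Inf {s. measure lebesgue {y \<in> {0<..<l}. g y > s} \<le> t}"

definition ysharp :: "real \<Rightarrow> ('a \<times> real \<Rightarrow> real) \<Rightarrow> 'a \<times> real \<Rightarrow> real" where
  "ysharp l h p = drearr l (\<lambda>y. h (fst p, y)) (snd p)"

definition cyl :: "'a set \<Rightarrow> real \<Rightarrow> ('a \<times> real) set" where
  "cyl D l = D \<times> {0<..<l}"

text \<open>w is C^2 on the open set U with derivatives up to order 2 extending
  continuously to closure U; G is the (extended) gradient, H p i the (extended)
  gradient of the i-th partial derivative.\<close>
definition C2_closure_data ::
  "('n::euclidean_space) set \<Rightarrow> ('n \<Rightarrow> real) \<Rightarrow> ('n \<Rightarrow> 'n) \<Rightarrow> ('n \<Rightarrow> 'n \<Rightarrow> 'n) \<Rightarrow> bool" where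
  "C2_closure_data U w G H \<longleftrightarrow>
     (\<forall>p\<in>U. (w has_derivative (\<lambda>h. G p \<bullet> h)) (at p)) \<and>
     (\<forall>p\<in>U. \<forall>i\<in>Basis. ((\<lambda>q. G q \<bullet> i) has_derivative (\<lambda>h. H p i \<bullet> h)) (at p)) \<and>
     continuous_on (closure U) w \<and> continuous_on (closure U) G \<and>
     (\<forall>i\<in>Basis. continuous_on (closure U) (\<lambda>p. H p i))"

text \<open>Classical solution in C^2(closure Omega) of
  -Lap w = F in Omega, dw/dnu = 0 on bottom and top, dw/dnu + alpha w = 0 on the lateral boundary.\<close>
definition is_solution ::
  "'a::euclidean_space set \<Rightarrow> ('a \<Rightarrow> real) \<Rightarrow> real \<Rightarrow> real \<Rightarrow> ('a \<times> real \<Rightarrow> real) \<Rightarrow> ('a \<times> real \<Rightarrow> real) \<Rightarrow> bool" where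
  "is_solution D \<rho> l \<alpha> F w \<longleftrightarrow>
     (\<exists>G H. C2_closure_data (cyl D l) w G H \<and>
        (\<forall>p\<in>cyl D l. - (\<Sum>i\<in>Basis. H p i \<bullet> i) = F p) \<and>
        (\<forall>x\<in>D. G (x, 0) \<bullet> (0, -1) = 0 \<and> G (x, l) \<bullet> (0, 1) = 0) \<and>
        (\<forall>x\<in>frontier D. \<forall>y\<in>{0..l}.
            G (x, y) \<bullet> (outer_normal \<rho> x, 0) + \<alpha> * w (x, y) = 0))"

end

theory Submission
  imports Defs
begin

text \<open>
  Since the rearrangement \<open>f\<^sup>#\<close> is nonincreasing in \<open>y\<close>, for \<open>h > 0\<close> the vertical difference
  \<open>Z(x, y) = v(x, y + h) - v(x, y)\<close> satisfies \<open>\<Delta>Z = f\<^sup>#(x, y) - f\<^sup>#(x, y + h) \<ge> 0\<close> on \<open>D \<times> (0, l - h)\<close>,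
  together with the Robin condition on the lateral boundary. As \<open>\<partial>\<^sub>y v\<close> vanishes on the top and
  bottom and is uniformly continuous, \<open>Z \<le> h \<eta>\<close> on the two ends once \<open>h\<close> is small, and the
  maximum principle propagates this bound to the whole cylinder. Summing such increments gives
  \<open>v(x, y\<^sub>2) - v(x, y\<^sub>1) \<le> (y\<^sub>2 - y\<^sub>1) \<eta>\<close> for every \<open>\<eta> > 0\<close>, so \<open>v\<close> is nonincreasing in \<open>y\<close>;
  a continuous nonincreasing function is its own decreasing rearrangement.

  Adding \<open>\<epsilon> (y - a)\<^sup>2\<close> makes the Laplacian strictly
  positive, which is impossible at an interior maximum; at a lateral boundary maximum above
  \<open>M \<ge> 0\<close> the Robin condition makes the outward derivative nonpositive, the one-sided first-order
  conditions then force the gradient to vanish, and the second-order conditions along inward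
  rays extend by continuity to all directions.
\<close>

section \<open>One-variable calculus\<close>

lemma continuous_on_pos_initial_segment:
  fixes h :: "real \<Rightarrow> real"
  assumes t: "t > 0" and cont: "continuous_on {0..t} h" and pos: "h 0 > 0"
  obtains s1 where "0 < s1" "s1 \<le> t" "\<And>s. 0 \<le> s \<Longrightarrow> s \<le> s1 \<Longrightarrow> h s > 0"
proof -
  have "continuous (at 0 within {0..t}) h"
    using cont t by (simp add: continuous_on_eq_continuous_within)
  then have "\<forall>\<^sub>F s in at 0 within {0..t}. h s > 0"
    using pos by (simp add: continuous_within order_tendstoD(1))
  then obtain e where e: "e > 0" "\<And>s. s \<in> {0..t} \<Longrightarrow> s \<noteq> 0 \<Longrightarrow> dist s 0 < e \<Longrightarrow> h s > 0"
    by (auto simp: eventually_at)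
  show thesis
  proof (rule that[of "min t (e/2)"])
    show "h s > 0" if "0 \<le> s" "s \<le> min t (e/2)" for s
    proof (cases "s = 0")
      case False
      with that e(1) have "s \<in> {0..t}" "dist s 0 < e" by (auto simp: dist_real_def)
      with False e(2) show ?thesis by blast
    qed (use pos in simp)
  qed (use e t in auto)
qed

lemma max_at_left_endpoint_derivs:
  fixes \<phi> g q :: "real \<Rightarrow> real"
  assumes t: "t > 0"
    and cont: "continuous_on {0..t} \<phi>" "continuous_on {0..t} g" "continuous_on {0..t} q"
    and \<phi>': "\<And>s. 0 < s \<Longrightarrow> s < t \<Longrightarrow> (\<phi> has_real_derivative g s) (at s)"
    and g': "\<And>s. 0 < s \<Longrightarrow> s < t \<Longrightarrow> (g has_real_derivative q s) (at s)"
    and max: "\<And>s. 0 \<le> s \<Longrightarrow> s \<le> t \<Longrightarrow> \<phi> s \<le> \<phi> 0"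
  shows "g 0 \<le> 0 \<and> (g 0 = 0 \<longrightarrow> q 0 \<le> 0)"
proof -
  have increasing: "f 0 < f s1"
    if "0 < s1" "s1 \<le> t" "continuous_on {0..t} f"
      "\<And>s. 0 < s \<Longrightarrow> s < s1 \<Longrightarrow> \<exists>y. (f has_real_derivative y) (at s) \<and> y > 0"
    for f :: "real \<Rightarrow> real" and s1
  proof (rule DERIV_pos_imp_increasing_open[of 0 s1 f])
    show "continuous_on {0..s1} f"
      by (rule continuous_on_subset[OF that(3)]) (use that(2) in auto)
  qed (use that in auto)
  have first: "g 0 \<le> 0"
  proof (rule ccontr)
    assume "\<not> g 0 \<le> 0"
    then have "g 0 > 0" by simp
    then obtain s1 where s1: "0 < s1" "s1 \<le> t" "\<And>s. 0 \<le> s \<Longrightarrow> s \<le> s1 \<Longrightarrow> g s > 0"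
      using continuous_on_pos_initial_segment[OF t cont(2)] by blast
    have "\<phi> 0 < \<phi> s1"
    proof (rule increasing[OF s1(1,2) cont(1)])
      fix s assume "0 < s" "s < s1"
      then show "\<exists>y. (\<phi> has_real_derivative y) (at s) \<and> y > 0"
        using \<phi>'[of s] s1(2) s1(3)[of s] by auto
    qed
    with max[of s1] s1 show False by simp
  qed
  have second: "q 0 \<le> 0" if g0: "g 0 = 0"
  proof (rule ccontr)
    assume "\<not> q 0 \<le> 0"
    then have "q 0 > 0" by simp
    then obtain s1 where s1: "0 < s1" "s1 \<le> t" "\<And>s. 0 \<le> s \<Longrightarrow> s \<le> s1 \<Longrightarrow> q s > 0"
      using continuous_on_pos_initial_segment[OF t cont(3)] by blast
    have g_pos: "g s > 0" if "0 < s" "s \<le> s1" for s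
    proof -
      have "g 0 < g s"
      proof (rule increasing[of s g])
        fix r assume "0 < r" "r < s"
        then show "\<exists>y. (g has_real_derivative y) (at r) \<and> y > 0"
          using g'[of r] that s1(2) s1(3)[of r] by auto
      qed (use that s1(2) cont(2) in auto)
      with g0 show ?thesis by simp
    qed
    have "\<phi> 0 < \<phi> s1"
    proof (rule increasing[OF s1(1,2) cont(1)])
      fix s assume "0 < s" "s < s1"
      then show "\<exists>y. (\<phi> has_real_derivative y) (at s) \<and> y > 0"
        using \<phi>'[of s] s1(2) g_pos[of s] by auto
    qed
    with max[of s1] s1 show False by simp
  qed
  from first second show ?thesis by blast
qed

lemma diff_le_of_deriv_le:
  fixes \<phi> \<phi>' :: "real \<Rightarrow> real"
  assumes "a < b" "continuous_on {a..b} \<phi>"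
    and "\<And>s. a < s \<Longrightarrow> s < b \<Longrightarrow> (\<phi> has_real_derivative \<phi>' s) (at s)"
    and "\<And>s. a < s \<Longrightarrow> s < b \<Longrightarrow> \<phi>' s \<le> c"
  shows "\<phi> b - \<phi> a \<le> (b - a) * c"
proof -
  obtain L z where z: "a < z" "z < b" "DERIV \<phi> z :> L" "\<phi> b - \<phi> a = (b - a) * L"
    using MVT[OF assms(1,2)] assms(3) real_differentiable_def by metis
  have "L \<le> c"
    using DERIV_unique[OF z(3) assms(3)[OF z(1,2)]] assms(4)[OF z(1,2)] by simp
  with z(4) assms(1) show ?thesis by (simp add: mult_left_mono)
qed

lemma antimono_if_small_increments:
  fixes g :: "real \<Rightarrow> real"
  assumes small: "\<And>\<eta>. \<eta> > 0 \<Longrightarrow> \<exists>\<delta>>0. \<forall>h y. 0 < h \<longrightarrow> h < \<delta> \<longrightarrow> 0 < y \<longrightarrow> y + h < l \<longrightarrow>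
      g (y + h) - g y \<le> h * \<eta>"
    and y: "0 < y1" "y1 \<le> y2" "y2 < l"
  shows "g y2 \<le> g y1"
proof (rule ccontr)
  assume "\<not> g y2 \<le> g y1"
  define \<Delta> where "\<Delta> = g y2 - g y1"
  have \<Delta>: "\<Delta> > 0"
    using \<open>\<not> g y2 \<le> g y1\<close> by (simp add: \<Delta>_def)
  then have y12: "y1 < y2"
    using y by (cases "y1 = y2") (auto simp: \<Delta>_def)
  define \<eta> where "\<eta> = \<Delta> / (2 * (y2 - y1))"
  obtain \<delta> where \<delta>: "\<delta> > 0" and inc: "\<And>h y. 0 < h \<Longrightarrow> h < \<delta> \<Longrightarrow> 0 < y \<Longrightarrow> y + h < l \<Longrightarrow>
      g (y + h) - g y \<le> h * \<eta>"
    using small[of \<eta>] \<Delta> y12 by (auto simp: \<eta>_def)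
  define N :: nat where "N = nat \<lceil>(y2 - y1) / \<delta>\<rceil> + 1"
  define h where "h = (y2 - y1) / N"
  have N: "N > 0" "(y2 - y1) / \<delta> < N"
    using real_nat_ceiling_ge[of "(y2 - y1) / \<delta>"] by (auto simp: N_def)
  have h: "h > 0" "h < \<delta>" "N * h = y2 - y1"
    using N y12 \<delta> by (auto simp: h_def field_simps)
  have "g (y1 + k * h) - g y1 \<le> k * h * \<eta>" if "k \<le> N" for k :: nat
    using that
  proof (induction k)
    case (Suc k)
    have "real (Suc k) * h \<le> N * h"
      using Suc.prems h by (intro mult_right_mono) auto
    then have "0 < y1 + k * h" "y1 + k * h + h < l"
      using y h by (auto simp: algebra_simps intro: add_pos_nonneg)
    then have "g (y1 + k * h + h) - g (y1 + k * h) \<le> h * \<eta>"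
      using inc h by blast
    with Suc show ?case by (simp add: algebra_simps)
  qed simp
  from this[of N] have "\<Delta> \<le> (y2 - y1) * \<eta>"
    using h by (simp add: \<Delta>_def)
  also have "\<dots> = \<Delta> / 2"
    using y12 by (simp add: \<eta>_def field_simps)
  finally show False using \<Delta> by simp
qed

section \<open>Second-order conditions at a constrained maximum\<close>

lemma has_real_derivative_along_ray:
  assumes "(F has_derivative (\<lambda>h. V \<bullet> h)) (at (p + s *\<^sub>R d))"
  shows "((\<lambda>s. F (p + s *\<^sub>R d)) has_real_derivative (V \<bullet> d)) (at s)"
proof -
  have "((\<lambda>s. p + s *\<^sub>R d) has_derivative (\<lambda>h. h *\<^sub>R d)) (at s)"
    by (auto intro!: derivative_eq_intros)
  from has_derivative_compose[OF this assms]
  have "((\<lambda>s. F (p + s *\<^sub>R d)) has_derivative (\<lambda>h. h * (V \<bullet> d))) (at s)"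
    by simp
  then show ?thesis
    by (simp add: has_field_derivative_def mult.commute[of _ "V \<bullet> d"])
qed

definition hessian_form :: "('n::euclidean_space \<Rightarrow> 'n \<Rightarrow> 'n) \<Rightarrow> 'n \<Rightarrow> 'n \<Rightarrow> real" where
  "hessian_form H p d = (\<Sum>i\<in>Basis. (d \<bullet> i) * (H p i \<bullet> d))"

lemma hessian_form_Basis:
  assumes "i \<in> Basis"
  shows "hessian_form H p i = H p i \<bullet> i"
proof -
  have "hessian_form H p i = (\<Sum>j\<in>Basis. if j = i then H p j \<bullet> i else 0)"
    unfolding hessian_form_def by (rule sum.cong) (auto simp: inner_Basis assms)
  then show ?thesis using assms by simp
qed

lemma max_along_ray_derivs:
  fixes W :: "'n::euclidean_space \<Rightarrow> real"
  assumes C2: "C2_closure_data U W G H" and p0: "p0 \<in> closure U"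
    and max: "\<And>p. p \<in> closure U \<Longrightarrow> W p \<le> W p0"
    and ray: "\<forall>\<^sub>F s in at_right 0. p0 + s *\<^sub>R d \<in> U"
  shows "G p0 \<bullet> d \<le> 0 \<and> (G p0 \<bullet> d = 0 \<longrightarrow> hessian_form H p0 d \<le> 0)"
proof -
  obtain t where t: "t > 0" and seg: "\<And>s. 0 < s \<Longrightarrow> s < t \<Longrightarrow> p0 + s *\<^sub>R d \<in> U"
    using ray by (auto simp: eventually_at_right_field)
  have on_seg: "p0 + s *\<^sub>R d \<in> closure U" if "0 \<le> s" "s \<le> t/2" for s
    using that seg[of s] t p0 closure_subset by (cases "s = 0") auto
  have cont: "continuous_on {0..t/2} (\<lambda>s. F (p0 + s *\<^sub>R d))"
    if "continuous_on (closure U) F" for F :: "'n \<Rightarrow> 'b::topological_space"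
    by (rule continuous_on_compose2[OF that]) (auto intro!: continuous_intros on_seg)
  from C2 have dW: "\<And>p. p \<in> U \<Longrightarrow> (W has_derivative (\<lambda>h. G p \<bullet> h)) (at p)"
    and dG: "\<And>p i. p \<in> U \<Longrightarrow> i \<in> Basis \<Longrightarrow> ((\<lambda>q. G q \<bullet> i) has_derivative (\<lambda>h. H p i \<bullet> h)) (at p)"
    and cW: "continuous_on (closure U) W" and cG: "continuous_on (closure U) G"
    and cH: "\<And>i. i \<in> Basis \<Longrightarrow> continuous_on (closure U) (\<lambda>p. H p i)"
    by (auto simp: C2_closure_data_def)
  have G_inner: "G p \<bullet> d = (\<Sum>i\<in>Basis. (d \<bullet> i) * (G p \<bullet> i))" for p
    by (subst euclidean_inner) (simp add: mult.commute)
  have "(\<lambda>s. G (p0 + s *\<^sub>R d) \<bullet> d) 0 \<le> 0 \<and>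
    ((\<lambda>s. G (p0 + s *\<^sub>R d) \<bullet> d) 0 = 0 \<longrightarrow> (\<lambda>s. hessian_form H (p0 + s *\<^sub>R d) d) 0 \<le> 0)"
  proof (rule max_at_left_endpoint_derivs[where \<phi>="\<lambda>s. W (p0 + s *\<^sub>R d)"])
    show "0 < t/2" using t by simp
    show "continuous_on {0..t/2} (\<lambda>s. W (p0 + s *\<^sub>R d))" by (rule cont[OF cW])
    show "continuous_on {0..t/2} (\<lambda>s. G (p0 + s *\<^sub>R d) \<bullet> d)"
      by (intro continuous_intros cont[OF cG])
    show "continuous_on {0..t/2} (\<lambda>s. hessian_form H (p0 + s *\<^sub>R d) d)"
      unfolding hessian_form_def by (intro continuous_intros cont cH)
    show "W (p0 + s *\<^sub>R d) \<le> W (p0 + 0 *\<^sub>R d)" if "0 \<le> s" "s \<le> t/2" for s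
      using max[OF on_seg[OF that]] by simp
    fix s assume s: "0 < s" "s < t/2"
    then have pU: "p0 + s *\<^sub>R d \<in> U" using seg by simp
    show "((\<lambda>s. W (p0 + s *\<^sub>R d)) has_real_derivative G (p0 + s *\<^sub>R d) \<bullet> d) (at s)"
      by (rule has_real_derivative_along_ray[OF dW[OF pU]])
    show "((\<lambda>s. G (p0 + s *\<^sub>R d) \<bullet> d) has_real_derivative hessian_form H (p0 + s *\<^sub>R d) d) (at s)"
      unfolding G_inner hessian_form_def
      by (intro DERIV_sum DERIV_cmult has_real_derivative_along_ray[where F="\<lambda>q. G q \<bullet> _"] dG pU)
  qed
  then show ?thesis by simp
qed

lemma nonpos_on_closed_halfspace:
  fixes f :: "'n::real_inner \<Rightarrow> real"
  assumes cont: "continuous_on UNIV f" and n: "n \<noteq> 0"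
    and open_half: "\<And>d. d \<bullet> n < 0 \<Longrightarrow> f d \<le> 0"
    and d: "d \<bullet> n \<le> 0"
  shows "f d \<le> 0"
proof -
  have "((\<lambda>\<delta>. f (d - \<delta> *\<^sub>R n)) \<longlongrightarrow> f (d - 0 *\<^sub>R n)) (at_right 0)"
    by (intro continuous_on_tendsto_compose[OF cont] tendsto_intros) auto
  moreover have "\<forall>\<^sub>F \<delta> in at_right 0. f (d - \<delta> *\<^sub>R n) \<le> 0"
    using eventually_at_right_less
  proof eventually_elim
    case (elim \<delta>)
    with n have "0 < \<delta> * (n \<bullet> n)" by simp
    with d have "(d - \<delta> *\<^sub>R n) \<bullet> n < 0"
      by (simp add: inner_diff_left)
    then show ?case by (rule open_half)
  qed
  ultimately have "f (d - 0 *\<^sub>R n) \<le> 0"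
    by (rule tendsto_upperbound) simp
  then show ?thesis by simp
qed

lemma trace_hessian_nonpos_at_max:
  fixes W :: "'n::euclidean_space \<Rightarrow> real"
  assumes C2: "C2_closure_data U W G H" and p0: "p0 \<in> closure U"
    and max: "\<And>p. p \<in> closure U \<Longrightarrow> W p \<le> W p0"
    and n: "n \<noteq> 0"
    and inward: "\<And>d. d \<bullet> n < 0 \<Longrightarrow> \<forall>\<^sub>F s in at_right 0. p0 + s *\<^sub>R d \<in> U"
    and outward: "G p0 \<bullet> n \<le> 0"
  shows "(\<Sum>i\<in>Basis. H p0 i \<bullet> i) \<le> 0"
proof -
  have ray: "G p0 \<bullet> d \<le> 0 \<and> (G p0 \<bullet> d = 0 \<longrightarrow> hessian_form H p0 d \<le> 0)" if "d \<bullet> n < 0" for d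
    using max_along_ray_derivs[OF C2 p0 max inward[OF that]] .
  have half: "G p0 \<bullet> d \<le> 0" if "d \<bullet> n \<le> 0" for d
    using ray by (intro nonpos_on_closed_halfspace[where f="\<lambda>d. G p0 \<bullet> d", OF _ n _ that])
      (auto intro: continuous_intros)
  have grad_nonpos: "G p0 \<bullet> d \<le> 0" for d
  proof (cases "d \<bullet> n \<le> 0")
    case False
    define \<mu> where "\<mu> = (d \<bullet> n) / (n \<bullet> n)"
    have "(d - \<mu> *\<^sub>R n) \<bullet> n = 0"
      using n by (simp add: \<mu>_def inner_diff_left)
    then have "G p0 \<bullet> (d - \<mu> *\<^sub>R n) \<le> 0" by (intro half) simp
    moreover have "\<mu> > 0"
      using False n by (simp add: \<mu>_def)
    then have "\<mu> * (G p0 \<bullet> n) \<le> 0"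
      using outward by (simp add: mult_nonneg_nonpos)
    ultimately show ?thesis by (simp add: inner_diff_right)
  qed (rule half)
  have critical: "G p0 \<bullet> d = 0" for d
    using grad_nonpos[of d] grad_nonpos[of "-d"] by simp
  have half_Q: "hessian_form H p0 d \<le> 0" if "d \<bullet> n \<le> 0" for d
    using ray critical
    by (intro nonpos_on_closed_halfspace[where f="hessian_form H p0", OF _ n _ that])
      (auto simp: hessian_form_def intro!: continuous_intros)
  have Q: "hessian_form H p0 d \<le> 0" for d
  proof -
    have "hessian_form H p0 (-d) = hessian_form H p0 d"
      by (simp add: hessian_form_def)
    then show ?thesis using half_Q[of d] half_Q[of "-d"] by (cases "d \<bullet> n \<le> 0") auto
  qed
  show ?thesis
    using Q by (simp add: hessian_form_Basis[symmetric] sum_nonpos)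
qed

section \<open>A maximum principle on the cylinder\<close>

lemma smooth_has_derivative_grad:
  assumes "smooth f"
  shows "(f has_derivative (\<lambda>h. grad f x \<bullet> h)) (at x)"
proof -
  have "Ck (Suc 0) f" using assms by (simp add: smooth_def)
  then have "f differentiable (at x)" by (simp add: differentiable_on_def)
  then have df: "(f has_derivative frechet_derivative f (at x)) (at x)"
    by (simp add: frechet_derivative_works)
  have "frechet_derivative f (at x) h = grad f x \<bullet> h" for h
  proof -
    have "linear (frechet_derivative f (at x))"
      using df by (rule has_derivative_linear)
    then have "frechet_derivative f (at x) h = (\<Sum>i\<in>Basis. (h \<bullet> i) * frechet_derivative f (at x) i)"
      by (subst euclidean_representation[symmetric, of h]) (simp add: linear_sum linear_scale)
    also have "\<dots> = grad f x \<bullet> h"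
      unfolding grad_def inner_sum_left
      by (rule sum.cong) (simp_all add: inner_commute)
    finally show ?thesis .
  qed
  then have "frechet_derivative f (at x) = (\<lambda>h. grad f x \<bullet> h)" by (rule ext)
  with df show ?thesis by simp
qed

lemma eventually_ray_in_open:
  fixes p d :: "'a::real_normed_vector"
  assumes "open U" "p \<in> U"
  shows "\<forall>\<^sub>F s in at_right 0. p + s *\<^sub>R d \<in> U"
proof -
  have "((\<lambda>s. p + s *\<^sub>R d) \<longlongrightarrow> p) (at_right 0)"
    by (auto intro!: tendsto_eq_intros)
  from topological_tendstoD[OF this assms] show ?thesis .
qed

lemma eventually_ray_in_sublevel:
  fixes \<rho> :: "'a::real_inner \<Rightarrow> real"
  assumes d\<rho>: "(\<rho> has_derivative (\<lambda>h. n \<bullet> h)) (at x)" and x: "\<rho> x = 0" and u: "n \<bullet> u < 0"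
  shows "\<forall>\<^sub>F s in at_right 0. \<rho> (x + s *\<^sub>R u) < 0"
proof -
  have "((\<lambda>s. \<rho> (x + s *\<^sub>R u)) has_real_derivative n \<bullet> u) (at 0 within {0<..})"
    using has_real_derivative_along_ray[of \<rho> n x 0 u] d\<rho>
    by (simp add: has_field_derivative_at_within)
  then have "((\<lambda>s. \<rho> (x + s *\<^sub>R u) / s) \<longlongrightarrow> n \<bullet> u) (at_right 0)"
    using x by (simp add: has_field_derivative_iff)
  then have "\<forall>\<^sub>F s in at_right 0. \<rho> (x + s *\<^sub>R u) / s < 0"
    using u by (rule order_tendstoD)
  with eventually_at_right_less show ?thesis
    by eventually_elim (simp add: divide_less_0_iff)
qed

lemma lateral_inward_rays:
  fixes D :: "'a::euclidean_space set" and a b y0 :: real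
  assumes dom: "smooth_bounded_domain D \<rho>" and x0: "x0 \<in> frontier D" and y0: "a < y0" "y0 < b"
    and d: "d \<bullet> (grad \<rho> x0, 0) < 0"
  shows "\<forall>\<^sub>F s in at_right 0. (x0, y0) + s *\<^sub>R d \<in> D \<times> {a<..<b}"
proof -
  have D_eq: "D = {x. \<rho> x < 0}"
    using dom by (simp add: smooth_bounded_domain_def)
  have "\<forall>\<^sub>F s in at_right 0. \<rho> (x0 + s *\<^sub>R fst d) < 0"
  proof (rule eventually_ray_in_sublevel)
    show "(\<rho> has_derivative (\<lambda>h. grad \<rho> x0 \<bullet> h)) (at x0)"
      using dom by (intro smooth_has_derivative_grad) (simp add: smooth_bounded_domain_def)
    show "\<rho> x0 = 0" using dom x0 by (auto simp: smooth_bounded_domain_def)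
    show "grad \<rho> x0 \<bullet> fst d < 0" using d by (simp add: inner_Pair_0 inner_commute)
  qed
  moreover have "\<forall>\<^sub>F s in at_right 0. y0 + s *\<^sub>R snd d \<in> {a<..<b}"
    using y0 by (intro eventually_ray_in_open) (auto simp: open_greaterThanLessThan)
  ultimately show ?thesis
    by eventually_elim (simp add: D_eq mem_Times_iff)
qed

lemma C2_closure_data_add_sq:
  fixes Z :: "'a::euclidean_space \<times> real \<Rightarrow> real"
  assumes "C2_closure_data U Z G H"
  shows "C2_closure_data U (\<lambda>p. Z p + \<epsilon> * (snd p - a)\<^sup>2)
    (\<lambda>p. G p + (0, 2 * \<epsilon> * (snd p - a))) (\<lambda>p i. H p i + (0, 2 * \<epsilon> * snd i))"
proof -
  have dq: "((\<lambda>p. \<epsilon> * (snd p - a)\<^sup>2) has_derivative (\<lambda>h. (0, 2 * \<epsilon> * (snd p - a)) \<bullet> h)) (at p)"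
    for p :: "'a \<times> real"
    by (auto intro!: derivative_eq_intros simp: inner_prod_def fun_eq_iff algebra_simps)
  have dl: "((\<lambda>q. (0, 2 * \<epsilon> * (snd q - a)) \<bullet> i) has_derivative (\<lambda>h. (0, 2 * \<epsilon> * snd i) \<bullet> h)) (at p)"
    for p i :: "'a \<times> real"
    by (auto intro!: derivative_eq_intros simp: inner_prod_def fun_eq_iff algebra_simps)
  from assms show ?thesis
    unfolding C2_closure_data_def
  proof (intro conjI ballI; (elim conjE)?)
    fix p assume "\<forall>p\<in>U. (Z has_derivative (\<lambda>h. G p \<bullet> h)) (at p)" "p \<in> U"
    from has_derivative_add[OF this(1)[rule_format, OF this(2)] dq]
    show "((\<lambda>p. Z p + \<epsilon> * (snd p - a)\<^sup>2) has_derivative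
        (\<lambda>h. (G p + (0, 2 * \<epsilon> * (snd p - a))) \<bullet> h)) (at p)"
      by (simp add: inner_add_left)
  next
    fix p i :: "'a \<times> real"
    assume "\<forall>p\<in>U. \<forall>i\<in>Basis. ((\<lambda>q. G q \<bullet> i) has_derivative (\<lambda>h. H p i \<bullet> h)) (at p)"
      "p \<in> U" "i \<in> Basis"
    from has_derivative_add[OF this(1)[rule_format, OF this(2,3)] dl]
    show "((\<lambda>q. (G q + (0, 2 * \<epsilon> * (snd q - a))) \<bullet> i) has_derivative
        (\<lambda>h. (H p i + (0, 2 * \<epsilon> * snd i)) \<bullet> h)) (at p)"
      by (simp add: inner_add_left)
  qed (auto intro!: continuous_intros)
qed

lemma sum_Basis_snd_sq: "(\<Sum>i\<in>(Basis :: ('a::euclidean_space \<times> real) set). (snd i)\<^sup>2) = 1"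
proof -
  have "inj_on (\<lambda>u. (u::'a, 0::real)) Basis" "inj_on (\<lambda>v. (0::'a, v::real)) Basis"
    by (auto intro!: inj_onI)
  then show ?thesis
    unfolding Basis_prod_def by (subst sum.union_disjoint) (auto simp: sum.reindex)
qed

lemma trace_add_snd_sq:
  fixes H :: "'a::euclidean_space \<times> real \<Rightarrow> 'a \<times> real \<Rightarrow> 'a \<times> real"
  shows "(\<Sum>i\<in>Basis. (H p i + (0, c * snd i)) \<bullet> i) = (\<Sum>i\<in>Basis. H p i \<bullet> i) + c"
proof -
  have "(H p i + (0, c * snd i)) \<bullet> i = H p i \<bullet> i + c * (snd i)\<^sup>2" for i
    by (simp add: inner_add_left inner_prod_def power2_eq_square algebra_simps)
  then show ?thesis
    by (simp add: sum.distrib sum_distrib_left[symmetric] sum_Basis_snd_sq)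
qed

lemma C2_closure_data_translate_diff:
  fixes U V :: "'n::euclidean_space set"
  assumes C2: "C2_closure_data U w G H" and V: "V \<subseteq> U" "(+) c ` V \<subseteq> U"
  shows "C2_closure_data V (\<lambda>p. w (c + p) - w p) (\<lambda>p. G (c + p) - G p) (\<lambda>p i. H (c + p) i - H p i)"
proof -
  have cl: "closure V \<subseteq> closure U" "(+) c ` closure V \<subseteq> closure U"
    using closure_mono[OF V(1)] closure_mono[OF V(2)] by (simp_all add: closure_translation)
  have translate: "((\<lambda>q. f (c + q)) has_derivative f') (at p)"
    if "(f has_derivative f') (at (c + p))" for f :: "'n \<Rightarrow> real" and f' p
    using has_derivative_compose[OF has_derivative_add[OF has_derivative_const has_derivative_ident] that]
    by simp
  have cont: "continuous_on (closure V) (\<lambda>p. F (c + p) - F p)"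
    if "continuous_on (closure U) F" for F :: "'n \<Rightarrow> 'b::real_normed_vector"
    by (intro continuous_on_diff continuous_on_compose2[OF that] continuous_on_subset[OF that])
      (auto intro!: continuous_intros simp: cl)
  have in_U: "p \<in> U" "c + p \<in> U" if "p \<in> V" for p
    using that V by auto
  from C2 show ?thesis
    unfolding C2_closure_data_def
  proof (intro conjI ballI; (elim conjE)?)
    fix p assume dw: "\<forall>p\<in>U. (w has_derivative (\<lambda>h. G p \<bullet> h)) (at p)" and "p \<in> V"
    from has_derivative_diff[OF translate[OF dw[rule_format]] dw[rule_format]] in_U[OF \<open>p \<in> V\<close>]
    show "((\<lambda>p. w (c + p) - w p) has_derivative (\<lambda>h. (G (c + p) - G p) \<bullet> h)) (at p)"
      by (simp add: inner_diff_left)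
  next
    fix p i :: 'n
    assume dG: "\<forall>p\<in>U. \<forall>i\<in>Basis. ((\<lambda>q. G q \<bullet> i) has_derivative (\<lambda>h. H p i \<bullet> h)) (at p)"
      and "p \<in> V" "i \<in> Basis"
    from has_derivative_diff[OF translate[OF dG[rule_format]] dG[rule_format]] in_U[OF \<open>p \<in> V\<close>] \<open>i \<in> Basis\<close>
    show "((\<lambda>q. (G (c + q) - G q) \<bullet> i) has_derivative (\<lambda>h. (H (c + p) i - H p i) \<bullet> h)) (at p)"
      by (simp add: inner_diff_left)
  qed (auto intro: cont)
qed

lemma exists_perturbed_max:
  fixes Z :: "'a::topological_space \<times> real \<Rightarrow> real"
  assumes K: "compact K" and Z: "continuous_on K Z" and p: "p \<in> K" "M < Z p"
    and bnd: "\<And>q. q \<in> K \<Longrightarrow> (snd q - a)\<^sup>2 \<le> R"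
  obtains \<epsilon> p0 where "\<epsilon> > 0" "p0 \<in> K" "M < Z p0"
    "\<And>q. q \<in> K \<Longrightarrow> Z q + \<epsilon> * (snd q - a)\<^sup>2 \<le> Z p0 + \<epsilon> * (snd p0 - a)\<^sup>2"
proof -
  define \<epsilon> where "\<epsilon> = (Z p - M) / (2 * (R + 1))"
  have R: "R \<ge> 0" using order_trans[OF zero_le_power2 bnd[OF p(1)]] .
  have \<epsilon>: "\<epsilon> > 0" "\<epsilon> * (R + 1) = (Z p - M) / 2"
    using p(2) R by (simp_all add: \<epsilon>_def field_simps)
  have "continuous_on K (\<lambda>q. Z q + \<epsilon> * (snd q - a)\<^sup>2)"
    using Z by (intro continuous_intros)
  with continuous_attains_sup[OF K] p(1) obtain p0 where p0: "p0 \<in> K"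
    and max: "\<And>q. q \<in> K \<Longrightarrow> Z q + \<epsilon> * (snd q - a)\<^sup>2 \<le> Z p0 + \<epsilon> * (snd p0 - a)\<^sup>2"
    by blast
  have "Z p \<le> Z p0 + \<epsilon> * (snd p0 - a)\<^sup>2"
    using max[OF p(1)] \<epsilon>(1) by (smt (verit) mult_nonneg_nonneg zero_le_power2)
  also have "\<dots> \<le> Z p0 + \<epsilon> * (R + 1)"
    using bnd[OF p0] \<epsilon>(1) by (simp add: mult_left_mono)
  also have "\<dots> = Z p0 + (Z p - M) / 2"
    using \<epsilon>(2) by simp
  finally have "M < Z p0" using p(2) by (simp add: field_simps)
  then show thesis by (rule that[OF \<epsilon>(1) p0 _ max])
qed

lemma cylinder_max_trace_nonpos:
  fixes D :: "'a::euclidean_space set" and W :: "'a \<times> real \<Rightarrow> real"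
  assumes dom: "smooth_bounded_domain D \<rho>"
    and C2: "C2_closure_data (D \<times> {a<..<b}) W G H"
    and x0: "x0 \<in> closure D" and y0: "a < y0" "y0 < b"
    and max: "\<And>q. q \<in> closure (D \<times> {a<..<b}) \<Longrightarrow> W q \<le> W (x0, y0)"
    and lateral: "x0 \<in> frontier D \<Longrightarrow> G (x0, y0) \<bullet> (outer_normal \<rho> x0, 0) \<le> 0"
  shows "(\<Sum>i\<in>Basis. H (x0, y0) i \<bullet> i) \<le> 0"
proof -
  have p0: "(x0, y0) \<in> closure (D \<times> {a<..<b})"
    using x0 y0 by (simp add: closure_Times)
  show ?thesis
  proof (cases "x0 \<in> D")
    case True
    have "open D"
      using dom unfolding smooth_bounded_domain_def by blast
    then have "open (D \<times> {a<..<b})" by (simp add: open_Times)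
    then have rays: "\<forall>\<^sub>F s in at_right 0. (x0, y0) + s *\<^sub>R d \<in> D \<times> {a<..<b}" for d
      using True y0 by (intro eventually_ray_in_open) auto
    obtain n :: "'a \<times> real" where "n \<in> Basis" using nonempty_Basis by blast
    then have "n \<noteq> 0" by auto
    moreover have "G (x0, y0) \<bullet> n \<le> 0"
      using max_along_ray_derivs[OF C2 p0 max rays] by blast
    ultimately show ?thesis
      using rays by (intro trace_hessian_nonpos_at_max[OF C2 p0 max]) auto
  next
    case False
    with x0 have frontier: "x0 \<in> frontier D" using closure_Un_frontier by blast
    define \<nu> where "\<nu> = grad \<rho> x0"
    have "\<nu> \<noteq> 0" using dom frontier by (simp add: smooth_bounded_domain_def \<nu>_def)
    then have "(\<nu>, 0::real) \<noteq> 0" by (simp add: zero_prod_def)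
    moreover have "G (x0, y0) \<bullet> (\<nu>, 0) = norm \<nu> * (G (x0, y0) \<bullet> (outer_normal \<rho> x0, 0))"
      using \<open>\<nu> \<noteq> 0\<close> by (simp add: \<nu>_def outer_normal_def inner_Pair_0)
    with lateral[OF frontier] have "G (x0, y0) \<bullet> (\<nu>, 0) \<le> 0"
      by (simp add: mult_nonneg_nonpos)
    ultimately show ?thesis
      using lateral_inward_rays[OF dom frontier y0]
      by (intro trace_hessian_nonpos_at_max[OF C2 p0 max]) (simp_all add: \<nu>_def)
  qed
qed

lemma robin_cylinder_max_principle:
  fixes D :: "'a::euclidean_space set" and Z :: "'a \<times> real \<Rightarrow> real"
  assumes dom: "smooth_bounded_domain D \<rho>" and ab: "a < b" and \<alpha>: "\<alpha> \<ge> 0" and M: "M \<ge> 0"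
    and C2: "C2_closure_data (D \<times> {a<..<b}) Z G H"
    and subharmonic: "\<And>p. p \<in> D \<times> {a<..<b} \<Longrightarrow> (\<Sum>i\<in>Basis. H p i \<bullet> i) \<ge> 0"
    and robin: "\<And>x y. x \<in> frontier D \<Longrightarrow> a < y \<Longrightarrow> y < b \<Longrightarrow>
      G (x, y) \<bullet> (outer_normal \<rho> x, 0) + \<alpha> * Z (x, y) = 0"
    and ends: "\<And>x. x \<in> D \<Longrightarrow> Z (x, a) \<le> M \<and> Z (x, b) \<le> M"
    and p: "p \<in> D \<times> {a<..<b}"
  shows "Z p \<le> M"
proof (rule ccontr)
  assume "\<not> Z p \<le> M"
  define U where "U = D \<times> {a<..<b}"
  have clU: "closure U = closure D \<times> {a..b}"
    using ab by (simp add: U_def closure_Times)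
  have "bounded D"
    using dom unfolding smooth_bounded_domain_def by blast
  then have cpt: "compact (closure U)"
    by (simp add: U_def bounded_Times)
  have bnd: "(snd q - a)\<^sup>2 \<le> (b - a)\<^sup>2" if "q \<in> closure U" for q
    using that by (intro power_mono) (auto simp: clU)
  have cZ: "continuous_on (closure U) Z"
    and cH: "\<And>i. i \<in> Basis \<Longrightarrow> continuous_on (closure U) (\<lambda>q. H q i)"
    using C2 by (simp_all add: U_def C2_closure_data_def)
  have "p \<in> closure U" "M < Z p"
    using p closure_subset[of U] \<open>\<not> Z p \<le> M\<close> by (auto simp: U_def)
  then obtain \<epsilon> p0 where \<epsilon>: "\<epsilon> > 0" and p0: "p0 \<in> closure U" and Zp0: "M < Z p0"
    and max: "\<And>q. q \<in> closure U \<Longrightarrow> Z q + \<epsilon> * (snd q - a)\<^sup>2 \<le> Z p0 + \<epsilon> * (snd p0 - a)\<^sup>2"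
    using exists_perturbed_max[OF cpt cZ _ _ bnd] by blast
  obtain x0 y0 where p0_eq [simp]: "p0 = (x0, y0)" by fastforce
  have x0: "x0 \<in> closure D" and "a \<le> y0" "y0 \<le> b"
    using p0 by (auto simp: clU)
  have "Z (x, c) \<le> M" if "x \<in> closure D" "c = a \<or> c = b" for x c
  proof (rule continuous_le_on_closure[where f="\<lambda>x. Z (x, c)"])
    show "continuous_on (closure D) (\<lambda>x. Z (x, c))"
      using that(2) ab
      by (intro continuous_on_compose2[OF cZ]) (auto intro!: continuous_intros simp: clU)
  qed (use that ends in auto)
  then have "y0 \<noteq> a" "y0 \<noteq> b"
    using x0 Zp0 by force+
  with \<open>a \<le> y0\<close> \<open>y0 \<le> b\<close> have y0: "a < y0" "y0 < b" by auto
  have "(\<Sum>i\<in>Basis. H (x0, y0) i \<bullet> i) \<ge> 0"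
  proof (rule continuous_ge_on_closure[where S=U])
    show "continuous_on (closure U) (\<lambda>q. \<Sum>i\<in>Basis. H q i \<bullet> i)"
      by (intro continuous_intros cH)
  qed (use subharmonic p0 U_def in auto)
  moreover have "(\<Sum>i\<in>Basis. (H (x0, y0) i + (0, 2 * \<epsilon> * snd i)) \<bullet> i) \<le> 0"
  proof (rule cylinder_max_trace_nonpos[OF dom C2_closure_data_add_sq[OF C2] x0 y0])
    show "Z q + \<epsilon> * (snd q - a)\<^sup>2 \<le> Z (x0, y0) + \<epsilon> * (snd (x0, y0) - a)\<^sup>2"
      if "q \<in> closure (D \<times> {a<..<b})" for q
      using max that by (simp add: U_def)
    assume frontier: "x0 \<in> frontier D"
    have "\<alpha> * Z (x0, y0) \<ge> 0"
      using \<alpha> Zp0 M by simp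
    with robin[OF frontier y0]
    show "(G (x0, y0) + (0, 2 * \<epsilon> * (snd (x0, y0) - a))) \<bullet> (outer_normal \<rho> x0, 0) \<le> 0"
      by (simp add: inner_add_left inner_Pair_0)
  qed
  ultimately show False
    using \<epsilon> by (simp add: trace_add_snd_sq)
qed

section \<open>Decreasing rearrangement\<close>

lemma measure_lebesgue_Ioo: "a \<le> b \<Longrightarrow> measure lebesgue {a<..<b::real} = b - a"
  by (subst measure_completion) auto

lemma drearr_antimono:
  fixes g :: "real \<Rightarrow> real"
  assumes bnd: "\<And>y. 0 < y \<Longrightarrow> y < l \<Longrightarrow> \<bar>g y\<bar> \<le> B"
    and t: "0 < t1" "t1 \<le> t2" "t2 < l"
  shows "drearr l g t2 \<le> drearr l g t1"
  unfolding drearr_def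
proof (rule cInf_superset_mono)
  have empty: "{y \<in> {0<..<l}. B < g y} = {}" using bnd by force
  have "measure lebesgue {y \<in> {0<..<l}. B < g y} = 0" unfolding empty by simp
  then have "B \<in> {s. measure lebesgue {y \<in> {0<..<l}. s < g y} \<le> t1}"
    using t by simp
  then show "{s. measure lebesgue {y \<in> {0<..<l}. s < g y} \<le> t1} \<noteq> {}" by blast
  show "bdd_below {s. measure lebesgue {y \<in> {0<..<l}. s < g y} \<le> t2}"
  proof (rule bdd_belowI)
    fix s assume s: "s \<in> {s. measure lebesgue {y \<in> {0<..<l}. s < g y} \<le> t2}"
    show "- B \<le> s"
    proof (rule ccontr)
      assume "\<not> - B \<le> s"
      then have "{y \<in> {0<..<l}. s < g y} = {0<..<l}" using bnd by force
      then show False using s t measure_lebesgue_Ioo[of 0 l] by simp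
    qed
  qed
qed (use t in auto)

lemma drearr_eq_self_if_antimono:
  fixes g :: "real \<Rightarrow> real"
  assumes antimono: "\<And>y1 y2. 0 < y1 \<Longrightarrow> y1 \<le> y2 \<Longrightarrow> y2 < l \<Longrightarrow> g y2 \<le> g y1"
    and cont: "continuous_on {0<..<l} g"
    and t: "0 < t" "t < l"
  shows "drearr l g t = g t"
  unfolding drearr_def
proof (rule cInf_eq_minimum)
  define A where "A s = {y \<in> {0<..<l}. s < g y}" for s
  have Ioo_lmeasurable: "{0<..<r} \<in> lmeasurable" for r :: real
    by (intro lmeasurable_open) auto
  have A_lmeasurable: "A s \<in> lmeasurable" for s
  proof (rule lmeasurable_open)
    have "A s = g -` {s<..} \<inter> {0<..<l}" by (auto simp: A_def)
    then show "open (A s)"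
      using cont by (simp add: continuous_on_open_vimage open_greaterThan)
    show "bounded (A s)"
      by (rule bounded_subset[OF bounded_Ioo[of 0 l]]) (auto simp: A_def)
  qed
  have "A (g t) \<subseteq> {0<..<t}"
  proof
    fix y assume y: "y \<in> A (g t)"
    have "\<not> t \<le> y"
    proof
      assume "t \<le> y"
      then have "g y \<le> g t" using antimono t y by (simp add: A_def)
      with y show False by (simp add: A_def)
    qed
    with y show "y \<in> {0<..<t}" by (simp add: A_def)
  qed
  then have "measure lebesgue (A (g t)) \<le> measure lebesgue {0<..<t}"
    using A_lmeasurable Ioo_lmeasurable by (intro measure_mono_fmeasurable) auto
  then show "g t \<in> {s. measure lebesgue {y \<in> {0<..<l}. s < g y} \<le> t}"
    using t measure_lebesgue_Ioo[of 0 t] by (simp add: A_def)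
  fix s assume "s \<in> {s. measure lebesgue {y \<in> {0<..<l}. s < g y} \<le> t}"
  then have s: "measure lebesgue (A s) \<le> t" by (simp add: A_def)
  show "g t \<le> s"
  proof (rule ccontr)
    assume "\<not> g t \<le> s"
    have "isCont g t"
      using cont t by (simp add: continuous_on_eq_continuous_at)
    then have "\<forall>\<^sub>F y in at t. s < g y \<and> y < l"
      using \<open>\<not> g t \<le> s\<close> t
      by (intro eventually_conj order_tendstoD[OF tendsto_ident_at] order_tendstoD[of g])
        (auto simp: isCont_def)
    then obtain d where d: "d > 0" "\<And>y. y \<noteq> t \<Longrightarrow> dist y t < d \<Longrightarrow> s < g y \<and> y < l"
      by (auto simp: eventually_at)
    define t' where "t' = t + d / 2"
    have t': "t < t'" "t' < l" "s < g t'"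
      using d(1) d(2)[of t'] by (auto simp: t'_def dist_real_def)
    have "{0<..<t'} \<subseteq> A s"
    proof
      fix y assume "y \<in> {0<..<t'}"
      with antimono[of y t'] t' have "0 < y" "y < l" "g t' \<le> g y" by auto
      with t' show "y \<in> A s" by (simp add: A_def)
    qed
    then have "measure lebesgue {0<..<t'} \<le> measure lebesgue (A s)"
      using A_lmeasurable Ioo_lmeasurable by (intro measure_mono_fmeasurable) auto
    with s t t' measure_lebesgue_Ioo[of 0 t'] show False by simp
  qed
qed

lemma ysharp_antimono:
  fixes h :: "'a \<times> real \<Rightarrow> real"
  assumes bnd: "bounded (h ` cyl D l)" and x: "x \<in> D" and y: "0 < y" "y \<le> y'" "y' < l"
  shows "ysharp l h (x, y') \<le> ysharp l h (x, y)"
proof -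
  obtain B where "\<And>q. q \<in> cyl D l \<Longrightarrow> \<bar>h q\<bar> \<le> B"
    using bnd by (auto simp: bounded_iff)
  then have "\<bar>h (x, s)\<bar> \<le> B" if "0 < s" "s < l" for s
    using x that by (simp add: cyl_def)
  then show ?thesis
    unfolding ysharp_def using drearr_antimono[of l "\<lambda>s. h (x, s)" B y y'] y by simp
qed

lemma ysharp_eq_self_if_antimono:
  fixes w :: "'a::topological_space \<times> real \<Rightarrow> real"
  assumes cont: "continuous_on (cyl D l) w"
    and antimono: "\<And>x y1 y2. x \<in> D \<Longrightarrow> 0 < y1 \<Longrightarrow> y1 \<le> y2 \<Longrightarrow> y2 < l \<Longrightarrow> w (x, y2) \<le> w (x, y1)"
    and p: "p \<in> cyl D l"
  shows "ysharp l w p = w p"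
proof -
  obtain x t where p_eq: "p = (x, t)" and x: "x \<in> D" and t: "0 < t" "t < l"
    using p by (auto simp: cyl_def)
  have "continuous_on {0<..<l} (\<lambda>y. w (x, y))"
    using x by (intro continuous_on_compose2[OF cont]) (auto intro!: continuous_intros simp: cyl_def)
  with antimono[OF x] t have "drearr l (\<lambda>y. w (x, y)) t = w (x, t)"
    by (intro drearr_eq_self_if_antimono) auto
  then show ?thesis by (simp add: p_eq ysharp_def)
qed

section \<open>Monotonicity of the solution in \<open>y\<close>\<close>

lemma vertical_increment_le:
  fixes D :: "'a::euclidean_space set" and v F :: "'a \<times> real \<Rightarrow> real"
  assumes dom: "smooth_bounded_domain D \<rho>" and \<alpha>: "\<alpha> \<ge> 0"
    and sol: "is_solution D \<rho> l \<alpha> F v"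
    and F_antimono: "\<And>x y y'. x \<in> D \<Longrightarrow> 0 < y \<Longrightarrow> y \<le> y' \<Longrightarrow> y' < l \<Longrightarrow> F (x, y') \<le> F (x, y)"
    and h: "0 < h" "h < l" and M: "M \<ge> 0"
    and ends: "\<And>x. x \<in> D \<Longrightarrow> v (x, h) - v (x, 0) \<le> M \<and> v (x, l) - v (x, l - h) \<le> M"
    and x: "x \<in> D" and y: "0 < y" "y + h < l"
  shows "v (x, y + h) - v (x, y) \<le> M"
proof -
  obtain G H where C2: "C2_closure_data (cyl D l) v G H"
    and pde: "\<And>p. p \<in> cyl D l \<Longrightarrow> - (\<Sum>i\<in>Basis. H p i \<bullet> i) = F p"
    and robin: "\<And>x y. x \<in> frontier D \<Longrightarrow> y \<in> {0..l} \<Longrightarrow>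
      G (x, y) \<bullet> (outer_normal \<rho> x, 0) + \<alpha> * v (x, y) = 0"
    using sol unfolding is_solution_def by blast
  define c where "c = (0::'a, h)"
  have shift: "c + (x', y') = (x', y' + h)" for x' y' by (simp add: c_def)
  have V: "D \<times> {0<..<l - h} \<subseteq> cyl D l" "(+) c ` (D \<times> {0<..<l - h}) \<subseteq> cyl D l"
    using h by (auto simp: cyl_def c_def)
  have "v (c + (x, y)) - v (x, y) \<le> M"
  proof (rule robin_cylinder_max_principle[OF dom _ \<alpha> M C2_closure_data_translate_diff[OF C2 V]])
    show "0 < l - h" "(x, y) \<in> D \<times> {0<..<l - h}"
      using h x y by auto
  next
    fix p assume p: "p \<in> D \<times> {0<..<l - h}"
    then obtain x' y' where p_eq: "p = (x', y')" and "x' \<in> D" "0 < y'" "y' + h < l"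
      by auto
    then have "F (c + p) \<le> F p"
      using F_antimono h by (simp add: shift)
    moreover have "p \<in> cyl D l" "c + p \<in> cyl D l" using V p by auto
    ultimately show "(\<Sum>i\<in>Basis. (H (c + p) i - H p i) \<bullet> i) \<ge> 0"
      using pde[of p] pde[of "c + p"] by (simp add: inner_diff_left sum_subtractf)
  next
    fix x' y' assume "x' \<in> frontier D" "0 < y'" "y' < l - h"
    then show "(G (c + (x', y')) - G (x', y')) \<bullet> (outer_normal \<rho> x', 0)
        + \<alpha> * (v (c + (x', y')) - v (x', y')) = 0"
      using robin[of x' y'] robin[of x' "y' + h"] h by (simp add: shift inner_diff_left algebra_simps)
  next
    fix x' assume "x' \<in> D"
    then show "v (c + (x', 0)) - v (x', 0) \<le> M \<and> v (c + (x', l - h)) - v (x', l - h) \<le> M"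
      using ends by (simp add: shift)
  qed
  then show ?thesis by (simp add: shift)
qed

lemma end_increments_small:
  fixes D :: "'a::euclidean_space set" and v :: "'a \<times> real \<Rightarrow> real"
  assumes D: "bounded D" and l: "l > 0" and C2: "C2_closure_data (cyl D l) v G H"
    and neumann: "\<And>x. x \<in> D \<Longrightarrow> G (x, 0) \<bullet> (0, 1) = 0 \<and> G (x, l) \<bullet> (0, 1) = 0"
    and \<eta>: "\<eta> > 0"
  obtains \<delta> where "\<delta> > 0"
    "\<And>h x. 0 < h \<Longrightarrow> h < \<delta> \<Longrightarrow> h < l \<Longrightarrow> x \<in> D \<Longrightarrow>
      v (x, h) - v (x, 0) \<le> h * \<eta> \<and> v (x, l) - v (x, l - h) \<le> h * \<eta>"
proof -
  have cl: "closure (cyl D l) = closure D \<times> {0..l}"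
    using l by (simp add: cyl_def closure_Times)
  from C2 have dv: "\<And>p. p \<in> cyl D l \<Longrightarrow> (v has_derivative (\<lambda>h. G p \<bullet> h)) (at p)"
    and cv: "continuous_on (closure (cyl D l)) v" and cG: "continuous_on (closure (cyl D l)) G"
    by (auto simp: C2_closure_data_def)
  have "uniformly_continuous_on (closure (cyl D l)) G"
    using cG D by (intro compact_uniformly_continuous) (simp_all add: cyl_def bounded_Times)
  then obtain \<delta> where \<delta>: "\<delta> > 0" and uc: "\<And>q q'. q \<in> closure (cyl D l) \<Longrightarrow>
      q' \<in> closure (cyl D l) \<Longrightarrow> dist q' q < \<delta> \<Longrightarrow> dist (G q') (G q) < \<eta>"
    using \<eta> unfolding uniformly_continuous_on_def by metis
  have slope: "G (x, s) \<bullet> (0, 1) \<le> \<eta>"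
    if "x \<in> D" "0 \<le> s" "s \<le> l" "s0 = 0 \<or> s0 = l" "\<bar>s - s0\<bar> < \<delta>" for x s s0
  proof -
    have "(x, s) \<in> closure (cyl D l)" "(x, s0) \<in> closure (cyl D l)"
      using that l closure_subset[of D] by (auto simp: cl)
    with that(5) have "norm (G (x, s) - G (x, s0)) < \<eta>"
      using uc by (simp add: dist_norm dist_Pair_Pair dist_real_def)
    moreover have "(G (x, s) - G (x, s0)) \<bullet> (0, 1) \<le> norm (G (x, s) - G (x, s0))"
      using norm_cauchy_schwarz[of "G (x, s) - G (x, s0)" "(0::'a, 1::real)"]
      by (simp add: norm_Pair)
    ultimately show ?thesis
      using neumann[OF that(1)] that(4) by (auto simp: inner_diff_left)
  qed
  have increment: "v (x, b) - v (x, a) \<le> (b - a) * \<eta>"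
    if "x \<in> D" "0 \<le> a" "a < b" "b \<le> l" "\<And>s. a < s \<Longrightarrow> s < b \<Longrightarrow> G (x, s) \<bullet> (0, 1) \<le> \<eta>"
    for x a b
  proof (rule diff_le_of_deriv_le[where \<phi>="\<lambda>s. v (x, s)" and \<phi>'="\<lambda>s. G (x, s) \<bullet> (0, 1)"])
    show "continuous_on {a..b} (\<lambda>s. v (x, s))"
      using that closure_subset[of D]
      by (intro continuous_on_compose2[OF cv]) (auto intro!: continuous_intros simp: cl)
    fix s assume "a < s" "s < b"
    then have "(x, 0) + s *\<^sub>R (0, 1) \<in> cyl D l"
      using that by (simp add: cyl_def)
    from has_real_derivative_along_ray[OF dv[OF this]]
    show "((\<lambda>s. v (x, s)) has_real_derivative G (x, s) \<bullet> (0, 1)) (at s)"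
      by simp
  qed (use that in auto)
  show thesis
  proof (rule that[OF \<delta>])
    fix h x assume h: "0 < h" "h < \<delta>" "h < l" and x: "x \<in> D"
    have "v (x, h) - v (x, 0) \<le> (h - 0) * \<eta>"
      using h x by (intro increment slope[of x _ 0]) auto
    moreover have "v (x, l) - v (x, l - h) \<le> (l - (l - h)) * \<eta>"
      using h x by (intro increment slope[of x _ l]) auto
    ultimately show "v (x, h) - v (x, 0) \<le> h * \<eta> \<and> v (x, l) - v (x, l - h) \<le> h * \<eta>"
      by simp
  qed
qed

lemma is_solution_antimono_in_y:
  fixes D :: "'a::euclidean_space set" and v F :: "'a \<times> real \<Rightarrow> real"
  assumes dom: "smooth_bounded_domain D \<rho>" and l: "l > 0" and \<alpha>: "\<alpha> \<ge> 0"
    and sol: "is_solution D \<rho> l \<alpha> F v"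
    and F_antimono: "\<And>x y y'. x \<in> D \<Longrightarrow> 0 < y \<Longrightarrow> y \<le> y' \<Longrightarrow> y' < l \<Longrightarrow> F (x, y') \<le> F (x, y)"
    and x: "x \<in> D" and y: "0 < y1" "y1 \<le> y2" "y2 < l"
  shows "v (x, y2) \<le> v (x, y1)"
proof (rule antimono_if_small_increments[where g="\<lambda>y. v (x, y)", OF _ y])
  fix \<eta> :: real assume \<eta>: "\<eta> > 0"
  obtain G H where C2: "C2_closure_data (cyl D l) v G H"
    and ends: "\<And>x. x \<in> D \<Longrightarrow> G (x, 0) \<bullet> (0, -1) = 0 \<and> G (x, l) \<bullet> (0, 1) = 0"
    using sol unfolding is_solution_def by blast
  have "G (x, 0) \<bullet> (0, 1) = 0 \<and> G (x, l) \<bullet> (0, 1) = 0" if "x \<in> D" for x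
    using ends[OF that] inner_minus_right[of "G (x, 0)" "(0, 1)"] by simp
  moreover have "bounded D"
    using dom unfolding smooth_bounded_domain_def by blast
  ultimately obtain \<delta> where \<delta>: "\<delta> > 0" and small: "\<And>h x. 0 < h \<Longrightarrow> h < \<delta> \<Longrightarrow> h < l \<Longrightarrow> x \<in> D \<Longrightarrow>
      v (x, h) - v (x, 0) \<le> h * \<eta> \<and> v (x, l) - v (x, l - h) \<le> h * \<eta>"
    using end_increments_small[OF _ l C2 _ \<eta>] by metis
  show "\<exists>\<delta>>0. \<forall>h y. 0 < h \<longrightarrow> h < \<delta> \<longrightarrow> 0 < y \<longrightarrow> y + h < l \<longrightarrow>
      v (x, y + h) - v (x, y) \<le> h * \<eta>"
  proof (intro exI[of _ \<delta>] conjI allI impI \<delta>)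
    fix h y assume h: "0 < h" "h < \<delta>" and y: "0 < y" "y + h < l"
    show "v (x, y + h) - v (x, y) \<le> h * \<eta>"
      using h y \<eta> small[OF h] x
      by (intro vertical_increment_le[OF dom \<alpha> sol F_antimono]) auto
  qed
qed

theorem corollary3p5:
  fixes D :: "'a::euclidean_space set" and \<rho> :: "'a \<Rightarrow> real"
    and l \<alpha> :: real and f v :: "'a \<times> real \<Rightarrow> real"
  assumes dom: "smooth_bounded_domain D \<rho>"
    and l: "l > 0" and alpha: "\<alpha> \<ge> 0"
    and fL2: "set_integrable lebesgue (cyl D l) (\<lambda>p. (f p)\<^sup>2)"
    and fcont: "continuous_on (closure (cyl D l)) f"
    and fsharpcont: "\<exists>F. continuous_on (closure (cyl D l)) F \<and>
                        (\<forall>p\<in>cyl D l. F p = ysharp l f p)"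
    and vsol: "is_solution D \<rho> l \<alpha> (ysharp l f) v"
    and mean0: "\<alpha> = 0 \<Longrightarrow> (LINT p:cyl D l|lebesgue. f p) = 0 \<and> (LINT p:cyl D l|lebesgue. v p) = 0"
    and usol: "\<exists>u. is_solution D \<rho> l \<alpha> f u \<and> (\<alpha> = 0 \<longrightarrow> (LINT p:cyl D l|lebesgue. u p) = 0)"
  shows "\<forall>p\<in>cyl D l. v p = ysharp l v p"
proof -
  \<comment> \<open>Only the monotonicity of \<open>f\<^sup>#\<close> in \<open>y\<close> enters.\<close>
  have "bounded D"
    using dom unfolding smooth_bounded_domain_def by blast
  then have "compact (closure (cyl D l))"
    by (simp add: cyl_def bounded_Times)
  with fcont have "bounded (f ` closure (cyl D l))"
    by (intro compact_imp_bounded compact_continuous_image)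
  then have bnd: "bounded (f ` cyl D l)"
    by (rule bounded_subset) (intro image_mono closure_subset)
  have antimono: "v (x, y2) \<le> v (x, y1)" if "x \<in> D" "0 < y1" "y1 \<le> y2" "y2 < l" for x y1 y2
    using is_solution_antimono_in_y[OF dom l alpha vsol ysharp_antimono[OF bnd] that] .
  have cont: "continuous_on (cyl D l) v"
    using vsol continuous_on_subset[OF _ closure_subset]
    by (auto simp: is_solution_def C2_closure_data_def)
  show ?thesis
    using ysharp_eq_self_if_antimono[OF cont antimono] by simp
qed

end
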